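(* Let $k\ge 2$ and let $K_{n_1,\ldots,n_k}$ be the complete $k$-partite graph with parts $V_1,\ldots,V_k$, where $n_1=|V_1|\ge n_2=|V_2|\ge\cdots\ge n_k=|V_k|\ge 1$. Then $$\omega(\mathrm{CUT}(K_{n_1,n_2,\ldots,n_k}))\ge 2^{n_2-1}.$$
   Context: For an undirected graph $G=(V,E)$ and $S\subseteq V$, $\delta(S)\subseteq E$ denotes the set of edges with exactly one endpoint in $S$, and $\mathbf v(S)\in\{0,1\}^{E}$ is its incidence vector ($v(S)_e=1$ iff $e\in\delta(S)$). The cut polytope is $\mathrm{CUT}(G)=\operatorname{conv}\{\mathbf v(S):S\subseteq V\}\subset\mathbb R^{E}$. The 1-skeleton of a polytope is the graph whose vertices are the polytope's vertices and whose edges are its one-dimensional faces; $\omega$ denotes its clique number. *)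

theory Defs
  imports "HOL-Analysis.Analysis"
begin

definition kpartite_edge :: "nat \<Rightarrow> (nat \<Rightarrow> 'v set) \<Rightarrow> 'v \<Rightarrow> 'v \<Rightarrow> bool" where
  "kpartite_edge k V u w \<longleftrightarrow>
     (\<exists>i\<in>{1..k}. \<exists>j\<in>{1..k}. i \<noteq> j \<and> u \<in> V i \<and> w \<in> V j)"

text \<open>The space R^E is realised inside
  R^('v x 'v): the coordinate (u,w) is used iff uw is an edge (both orientations carry
  the same value), all other coordinates are 0. This is an injective linear image of R^E,
  so the face structure of the polytope is unchanged.\<close>
definition cut_vec :: "('v \<Rightarrow> 'v \<Rightarrow> bool) \<Rightarrow> 'v set \<Rightarrow> real ^ ('v::finite \<times> 'v)" where
  "cut_vec E S = (\<chi> p. if E (fst p) (snd p) \<and> (fst p \<in> S \<longleftrightarrow> snd p \<notin> S) then 1 else 0)"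

definition cut_polytope :: "'v set \<Rightarrow> ('v \<Rightarrow> 'v \<Rightarrow> bool) \<Rightarrow> (real ^ ('v::finite \<times> 'v)) set" where
  "cut_polytope Vs E = convex hull {cut_vec E S | S. S \<subseteq> Vs}"

definition skeleton_adjacent :: "'a::euclidean_space set \<Rightarrow> 'a \<Rightarrow> 'a \<Rightarrow> bool" where
  "skeleton_adjacent P x y \<longleftrightarrow>
     x extreme_point_of P \<and> y extreme_point_of P \<and> x \<noteq> y \<and>
     (\<exists>F. F face_of P \<and> aff_dim F = 1 \<and> x \<in> F \<and> y \<in> F)"

definition skeleton_clique :: "'a::euclidean_space set \<Rightarrow> 'a set \<Rightarrow> bool" where
  "skeleton_clique P C \<longleftrightarrow>
     (\<forall>x\<in>C. x extreme_point_of P) \<and>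
     (\<forall>x\<in>C. \<forall>y\<in>C. x \<noteq> y \<longrightarrow> skeleton_adjacent P x y)"

end

theory Submission
  imports Defs
begin

text \<open>Two cut vectors \<open>\<delta>(S)\<close>, \<open>\<delta>(T)\<close> span an edge of the cut polytope as soon as
  \<open>D = S \<triangle> T\<close> and its complement both induce connected subgraphs. Indeed, the linear
  functional that is \<open>\<pm>1\<close> on the edges not crossing \<open>D\<close>, with signs chosen so that \<open>\<delta>(S)\<close>
  maximises it, is maximal exactly at the cuts \<open>\<delta>(U)\<close> that agree with \<open>\<delta>(S)\<close> on those edges;
  then \<open>U \<triangle> S\<close> is constant on \<open>D\<close> and on its complement, so \<open>\<delta>(U)\<close> is \<open>\<delta>(S)\<close> or \<open>\<delta>(T)\<close>.

  In the complete multipartite graph fix an injection \<open>f : V\<^sub>2 \<rightarrow> V\<^sub>1\<close> and a vertex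
  \<open>b\<^sub>0 \<in> V\<^sub>2\<close>. For \<open>A \<subseteq> V\<^sub>2 - {b\<^sub>0}\<close> the sets \<open>A \<union> f A\<close> pairwise differ by \<open>M \<union> f M\<close> with
  \<open>M \<subseteq> V\<^sub>2 - {b\<^sub>0}\<close>, which induces a complete bipartite graph, while its complement is connected
  through \<open>b\<^sub>0\<close> and \<open>f b\<^sub>0\<close>. This gives \<open>2^(n\<^sub>2 - 1)\<close> pairwise adjacent vertices.\<close>

definition sign_functional :: "('v \<Rightarrow> 'v \<Rightarrow> bool) \<Rightarrow> 'v set \<Rightarrow> ('v \<times> 'v) set \<Rightarrow> real ^ ('v::finite \<times> 'v)"
  where "sign_functional E S Q = (\<chi> p. if p \<in> Q then (if cut_vec E S $ p = 1 then 1 else -1) else 0)"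

lemma inner_sign_functional_cut_vec:
  fixes E :: "'v::finite \<Rightarrow> 'v \<Rightarrow> bool"
  shows "sign_functional E S Q \<bullet> cut_vec E U =
           sign_functional E S Q \<bullet> cut_vec E S - (\<Sum>p\<in>Q. \<bar>cut_vec E U $ p - cut_vec E S $ p\<bar>)"
proof -
  have "sign_functional E S Q $ p * cut_vec E U $ p = sign_functional E S Q $ p * cut_vec E S $ p
          - (if p \<in> Q then \<bar>cut_vec E U $ p - cut_vec E S $ p\<bar> else 0)" for p
    unfolding sign_functional_def cut_vec_def by simp
  then have "sign_functional E S Q \<bullet> cut_vec E U =
      (\<Sum>p\<in>UNIV. sign_functional E S Q $ p * cut_vec E S $ p
         - (if p \<in> Q then \<bar>cut_vec E U $ p - cut_vec E S $ p\<bar> else 0))"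
    unfolding inner_vec_def inner_real_def by (rule sum.cong[OF refl])
  then show ?thesis
    by (simp add: sum_subtractf inner_vec_def sum.If_cases)
qed

lemma sign_functional_cut_vec_le:
  fixes E :: "'v::finite \<Rightarrow> 'v \<Rightarrow> bool"
  shows "sign_functional E S Q \<bullet> cut_vec E U \<le> sign_functional E S Q \<bullet> cut_vec E S"
  using inner_sign_functional_cut_vec[of E S Q U] sum_nonneg[of Q "\<lambda>p. \<bar>cut_vec E U $ p - cut_vec E S $ p\<bar>"]
  by simp

lemma sign_functional_cut_vec_eq_iff:
  fixes E :: "'v::finite \<Rightarrow> 'v \<Rightarrow> bool"
  shows "sign_functional E S Q \<bullet> cut_vec E U = sign_functional E S Q \<bullet> cut_vec E S \<longleftrightarrow>
           (\<forall>p\<in>Q. cut_vec E U $ p = cut_vec E S $ p)"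
  using inner_sign_functional_cut_vec[of E S Q U] by (simp add: sum_nonneg_eq_0_iff)

lemma cut_vec_nth_eq_iff:
  "cut_vec E U $ (u, w) = cut_vec E S $ (u, w) \<longleftrightarrow>
     (E u w \<longrightarrow> ((u \<in> U \<longleftrightarrow> u \<in> S) \<longleftrightarrow> (w \<in> U \<longleftrightarrow> w \<in> S)))"
  unfolding cut_vec_def by auto

lemma cut_vec_eqI:
  assumes "\<And>u w. E u w \<Longrightarrow> (u \<in> U \<longleftrightarrow> u \<in> S) \<longleftrightarrow> (w \<in> U \<longleftrightarrow> w \<in> S)"
  shows "cut_vec E U = cut_vec E S"
  using assms by (auto simp: vec_eq_iff cut_vec_nth_eq_iff)

lemma face_of_convex_hull_supporting_hyperplane:
  fixes X :: "'a::euclidean_space set"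
  assumes "finite X" and "\<And>x. x \<in> X \<Longrightarrow> c \<bullet> x \<le> m"
  shows "convex hull {x \<in> X. c \<bullet> x = m} face_of convex hull X"
proof -
  have "convex hull X \<subseteq> {x. c \<bullet> x \<le> m}"
    using assms(2) by (intro hull_minimal) (auto simp: convex_halfspace_le)
  then have F: "(convex hull X \<inter> {x. c \<bullet> x = m}) face_of convex hull X"
    by (intro face_of_Int_supporting_hyperplane_le) auto
  then obtain X' where X': "X' \<subseteq> X" "convex hull X \<inter> {x. c \<bullet> x = m} = convex hull X'"
    using face_of_convex_hull_subset[OF finite_imp_compact[OF assms(1)]] by blast
  then have "X' \<subseteq> {x \<in> X. c \<bullet> x = m}"
    using hull_subset[of X' convex] by auto
  then have "convex hull X' \<subseteq> convex hull {x \<in> X. c \<bullet> x = m}"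
    by (rule hull_mono)
  moreover have "convex hull {x \<in> X. c \<bullet> x = m} \<subseteq> convex hull X \<inter> {x. c \<bullet> x = m}"
    by (intro hull_minimal) (auto simp: convex_Int convex_hyperplane hull_inc)
  ultimately show ?thesis
    using F X' by auto
qed

lemma face_of_cut_polytope_agreeing_cuts:
  fixes E :: "'v::finite \<Rightarrow> 'v \<Rightarrow> bool"
  shows "convex hull {cut_vec E U | U. U \<subseteq> Vs \<and> (\<forall>p\<in>Q. cut_vec E U $ p = cut_vec E S $ p)}
           face_of cut_polytope Vs E"
proof -
  let ?c = "sign_functional E S Q"
  let ?X = "{cut_vec E U | U. U \<subseteq> Vs}"
  have "finite ?X"
    using finite_image_set[of "\<lambda>U. U \<subseteq> Vs" "cut_vec E"] by simp
  moreover have "?c \<bullet> x \<le> ?c \<bullet> cut_vec E S" if "x \<in> ?X" for x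
    using that sign_functional_cut_vec_le by blast
  ultimately have "convex hull {x \<in> ?X. ?c \<bullet> x = ?c \<bullet> cut_vec E S} face_of cut_polytope Vs E"
    unfolding cut_polytope_def by (rule face_of_convex_hull_supporting_hyperplane)
  moreover have "{x \<in> ?X. ?c \<bullet> x = ?c \<bullet> cut_vec E S} =
      {cut_vec E U | U. U \<subseteq> Vs \<and> (\<forall>p\<in>Q. cut_vec E U $ p = cut_vec E S $ p)}"
    using sign_functional_cut_vec_eq_iff[of E S Q] by blast
  ultimately show ?thesis
    by simp
qed

definition induced_connected :: "('v \<Rightarrow> 'v \<Rightarrow> bool) \<Rightarrow> 'v set \<Rightarrow> bool"
  where "induced_connected E X \<longleftrightarrow> (\<forall>u\<in>X. \<forall>w\<in>X. (\<lambda>a b. E a b \<and> a \<in> X \<and> b \<in> X)\<^sup>*\<^sup>* u w)"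

lemma induced_connectedI_hub:
  assumes "symp E" and "h \<in> X"
    and hub: "\<And>x. x \<in> X \<Longrightarrow> (\<lambda>a b. E a b \<and> a \<in> X \<and> b \<in> X)\<^sup>*\<^sup>* x h"
  shows "induced_connected E X"
  unfolding induced_connected_def
proof (intro ballI)
  let ?R = "\<lambda>a b. E a b \<and> a \<in> X \<and> b \<in> X"
  fix u w assume "u \<in> X" "w \<in> X"
  have "symp ?R\<^sup>*\<^sup>*"
    using assms(1) by (intro symp_rtranclp) (auto simp: symp_def)
  then have "?R\<^sup>*\<^sup>* h w"
    using hub[OF \<open>w \<in> X\<close>] by (rule sympD)
  with hub[OF \<open>u \<in> X\<close>] show "?R\<^sup>*\<^sup>* u w"
    by (rule rtranclp_trans)
qed

lemma induced_connected_constant: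
  assumes "induced_connected E X" and "\<And>u w. E u w \<Longrightarrow> u \<in> X \<Longrightarrow> w \<in> X \<Longrightarrow> P u = P w"
    and "u \<in> X" and "w \<in> X"
  shows "P u = P w"
proof -
  have "(\<lambda>a b. E a b \<and> a \<in> X \<and> b \<in> X)\<^sup>*\<^sup>* u w"
    using assms(1,3,4) unfolding induced_connected_def by blast
  then show ?thesis
    by induction (use assms(2) in auto)
qed

lemma cut_vec_agreeing_off_sym_diff:
  fixes E :: "'v::finite \<Rightarrow> 'v \<Rightarrow> bool"
  assumes edges: "\<And>u w. E u w \<Longrightarrow> u \<in> Vs \<and> w \<in> Vs"
    and conn_D: "induced_connected E (sym_diff S T)"
    and conn_compl: "induced_connected E (Vs - sym_diff S T)"
    and agree: "\<And>u w. E u w \<Longrightarrow> (u \<in> sym_diff S T \<longleftrightarrow> w \<in> sym_diff S T) \<Longrightarrow>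
      cut_vec E U $ (u, w) = cut_vec E S $ (u, w)"
  shows "cut_vec E U \<in> {cut_vec E S, cut_vec E T}"
proof -
  define D where "D = sym_diff S T"
  define P where "P z \<longleftrightarrow> (z \<in> U \<longleftrightarrow> z \<in> S)" for z
  have P_edge: "P u = P w" if "E u w" "u \<in> D \<longleftrightarrow> w \<in> D" for u w
    using agree[OF that[unfolded D_def]] that(1) unfolding P_def cut_vec_nth_eq_iff by blast
  have P_D: "P u = P w" if "u \<in> D" "w \<in> D" for u w
    using induced_connected_constant[OF conn_D[folded D_def]] P_edge that by blast
  have P_compl: "P u = P w" if "u \<in> Vs - D" "w \<in> Vs - D" for u w
    using induced_connected_constant[OF conn_compl[folded D_def]] P_edge that by blast
  show ?thesis
  proof (cases "\<forall>u\<in>D. \<forall>w\<in>Vs - D. P u = P w")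
    case True
    then have "P u = P w" if "E u w" for u w
      using edges[OF that] P_D P_compl by blast
    then have "cut_vec E U = cut_vec E S"
      by (intro cut_vec_eqI) (simp add: P_def)
    then show ?thesis by simp
  next
    case False
    then have "P u \<noteq> P w" if "u \<in> D" "w \<in> Vs - D" for u w
      using that P_D P_compl by blast
    then have "(u \<in> U \<longleftrightarrow> u \<in> T) \<longleftrightarrow> (w \<in> U \<longleftrightarrow> w \<in> T)" if "E u w" for u w
      using edges[OF that] P_D P_compl unfolding P_def D_def by blast
    then have "cut_vec E U = cut_vec E T"
      by (rule cut_vec_eqI)
    then show ?thesis by simp
  qed
qed

lemma face_of_cut_polytope_pair:
  fixes E :: "'v::finite \<Rightarrow> 'v \<Rightarrow> bool"
  assumes edges: "\<And>u w. E u w \<Longrightarrow> u \<in> Vs \<and> w \<in> Vs"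
    and "S \<subseteq> Vs" "T \<subseteq> Vs"
    and conn: "induced_connected E (sym_diff S T)" "induced_connected E (Vs - sym_diff S T)"
  shows "convex hull {cut_vec E S, cut_vec E T} face_of cut_polytope Vs E"
proof -
  define Q where "Q = {(u, w). E u w \<and> (u \<in> sym_diff S T \<longleftrightarrow> w \<in> sym_diff S T)}"
  have "cut_vec E U \<in> {cut_vec E S, cut_vec E T}"
    if "\<forall>p\<in>Q. cut_vec E U $ p = cut_vec E S $ p" for U
    using cut_vec_agreeing_off_sym_diff[OF edges conn] that unfolding Q_def by blast
  moreover have "\<forall>p\<in>Q. cut_vec E T $ p = cut_vec E S $ p"
    unfolding Q_def by (auto simp: cut_vec_nth_eq_iff)
  ultimately have "{cut_vec E U | U. U \<subseteq> Vs \<and> (\<forall>p\<in>Q. cut_vec E U $ p = cut_vec E S $ p)} =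
      {cut_vec E S, cut_vec E T}"
    using assms(2,3) by blast
  then show ?thesis
    using face_of_cut_polytope_agreeing_cuts[of E Vs Q S] by simp
qed

lemma skeleton_clique_cut_polytope:
  fixes E :: "'v::finite \<Rightarrow> 'v \<Rightarrow> bool"
  assumes edges: "\<And>u w. E u w \<Longrightarrow> u \<in> Vs \<and> w \<in> Vs"
    and "\<SS> \<subseteq> Pow Vs"
    and conn: "\<And>S T. S \<in> \<SS> \<Longrightarrow> T \<in> \<SS> \<Longrightarrow>
      induced_connected E (sym_diff S T) \<and> induced_connected E (Vs - sym_diff S T)"
  shows "skeleton_clique (cut_polytope Vs E) (cut_vec E ` \<SS>)"
proof -
  have face: "convex hull {cut_vec E S, cut_vec E T} face_of cut_polytope Vs E"
    if "S \<in> \<SS>" "T \<in> \<SS>" for S T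
    using face_of_cut_polytope_pair[OF edges] assms(2) conn[OF that] that by blast
  have extreme: "cut_vec E S extreme_point_of cut_polytope Vs E" if "S \<in> \<SS>" for S
    using face[OF that that] by (simp add: face_of_singleton)
  have "skeleton_adjacent (cut_polytope Vs E) (cut_vec E S) (cut_vec E T)"
    if "S \<in> \<SS>" "T \<in> \<SS>" "cut_vec E S \<noteq> cut_vec E T" for S T
    unfolding skeleton_adjacent_def
    using that extreme face[OF that(1,2)]
    by (intro conjI exI[of _ "convex hull {cut_vec E S, cut_vec E T}"])
       (auto simp: aff_dim_convex_hull hull_inc)
  with extreme show ?thesis
    unfolding skeleton_clique_def by blast
qed

lemma kpartite_edgeI:
  "i \<in> {1..k} \<Longrightarrow> j \<in> {1..k} \<Longrightarrow> i \<noteq> j \<Longrightarrow> u \<in> V i \<Longrightarrow> w \<in> V j \<Longrightarrow> kpartite_edge k V u w"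
  unfolding kpartite_edge_def by blast

lemma symp_kpartite_edge: "symp (kpartite_edge k V)"
proof (rule sympI)
  fix u w assume "kpartite_edge k V u w"
  then obtain i j where "i \<in> {1..k}" "j \<in> {1..k}" "i \<noteq> j" "u \<in> V i" "w \<in> V j"
    unfolding kpartite_edge_def by blast
  then show "kpartite_edge k V w u"
    by (intro kpartite_edgeI[of j k i]) auto
qed

lemma kpartite_edge_in_parts:
  "kpartite_edge k V u w \<Longrightarrow> u \<in> (\<Union>i\<in>{1..k}. V i) \<and> w \<in> (\<Union>i\<in>{1..k}. V i)"
  unfolding kpartite_edge_def by auto

lemma sym_diff_Un_image:
  assumes "inj_on f Y" "f ` Y \<inter> Y = {}" "A \<subseteq> Y" "B \<subseteq> Y"
  shows "sym_diff (A \<union> f ` A) (B \<union> f ` B) =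
           sym_diff A B \<union> f ` sym_diff A B"
proof -
  have "f ` (A - B) = f ` A - f ` B" "f ` (B - A) = f ` B - f ` A"
    using assms by (auto intro!: inj_on_image_set_diff[OF assms(1)])
  moreover have "A \<inter> f ` B = {}" "B \<inter> f ` A = {}"
    using assms by blast+
  ultimately show ?thesis
    by (auto simp: image_Un)
qed

locale kpartite_pairing =
  fixes k :: nat and V :: "nat \<Rightarrow> 'v::finite set" and f :: "'v \<Rightarrow> 'v" and b\<^sub>0 :: 'v
  assumes two_le_k: "2 \<le> k"
    and disjoint_12: "V 1 \<inter> V 2 = {}"
    and inj_f: "inj_on f (V 2)"
    and f_into: "f ` V 2 \<subseteq> V 1"
    and b\<^sub>0: "b\<^sub>0 \<in> V 2"
begin

abbreviation "E \<equiv> kpartite_edge k V"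
abbreviation "Vs \<equiv> \<Union>i\<in>{1..k}. V i"

lemma one_two_parts: "1 \<in> {1..k}" "2 \<in> {1..k}"
  using two_le_k by auto

lemma edge_12:
  assumes "u \<in> V 1" "w \<in> V 2"
  shows "E u w \<and> E w u"
proof
  show "E u w"
    by (rule kpartite_edgeI[OF one_two_parts]) (use assms in simp_all)
  show "E w u"
    by (rule kpartite_edgeI[OF one_two_parts(2,1)]) (use assms in simp_all)
qed

lemma parts_12_subset: "V 1 \<subseteq> Vs" "V 2 \<subseteq> Vs"
  using one_two_parts by blast+

lemma image_f_disjoint: "f ` V 2 \<inter> V 2 = {}"
  using f_into disjoint_12 by blast

definition matched_sets :: "'v set set"
  where "matched_sets = (\<lambda>A. A \<union> f ` A) ` Pow (V 2 - {b\<^sub>0})"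

lemma induced_connected_matched:
  assumes "M \<subseteq> V 2"
  shows "induced_connected E (M \<union> f ` M)"
proof (cases "M = {}")
  case True
  then show ?thesis by (simp add: induced_connected_def)
next
  case False
  then obtain m\<^sub>0 where m\<^sub>0: "m\<^sub>0 \<in> M" by blast
  let ?R = "\<lambda>a b. E a b \<and> a \<in> M \<union> f ` M \<and> b \<in> M \<union> f ` M"
  have matched_edge: "?R (f m') m \<and> ?R m (f m')" if "m \<in> M" "m' \<in> M" for m m'
  proof -
    have "f m' \<in> V 1" "m \<in> V 2"
      using that assms f_into by auto
    then show ?thesis
      using edge_12 that by auto
  qed
  show ?thesis
  proof (rule induced_connectedI_hub[OF symp_kpartite_edge])
    show "m\<^sub>0 \<in> M \<union> f ` M"
      using m\<^sub>0 by simp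
    fix x assume "x \<in> M \<union> f ` M"
    then consider "x \<in> M" | m where "m \<in> M" "x = f m"
      by blast
    then show "?R\<^sup>*\<^sup>* x m\<^sub>0"
    proof cases
      case 1
      have "?R x (f m\<^sub>0)" "?R (f m\<^sub>0) m\<^sub>0"
        using matched_edge[OF 1 m\<^sub>0] matched_edge[OF m\<^sub>0 m\<^sub>0] by simp_all
      then show ?thesis
        by (rule converse_rtranclp_into_rtranclp[OF _ r_into_rtranclp])
    next
      case 2
      have "?R (f m) m\<^sub>0"
        using matched_edge[OF m\<^sub>0 2(1)] by simp
      then show ?thesis
        unfolding 2(2) by (rule r_into_rtranclp)
    qed
  qed
qed

lemma induced_connected_compl_matched:
  assumes M: "M \<subseteq> V 2 - {b\<^sub>0}"
  shows "induced_connected E (Vs - (M \<union> f ` M))"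
proof (rule induced_connectedI_hub[OF symp_kpartite_edge])
  let ?X = "Vs - (M \<union> f ` M)"
  let ?R = "\<lambda>a b. E a b \<and> a \<in> ?X \<and> b \<in> ?X"
  have fM: "f ` M \<subseteq> V 1"
    using M f_into by auto
  have fb\<^sub>0: "f b\<^sub>0 \<in> V 1" "f b\<^sub>0 \<notin> f ` M"
    using f_into b\<^sub>0 M inj_on_image_mem_iff[OF inj_f b\<^sub>0, of M] by auto
  show b\<^sub>0X: "b\<^sub>0 \<in> ?X"
    using M fM b\<^sub>0 parts_12_subset disjoint_12 by auto
  have fb\<^sub>0X: "f b\<^sub>0 \<in> ?X"
    using M fb\<^sub>0 parts_12_subset disjoint_12 by auto
  fix x assume x: "x \<in> ?X"
  show "?R\<^sup>*\<^sup>* x b\<^sub>0"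
  proof (cases "x \<in> V 2")
    case True
    have "?R x (f b\<^sub>0)" "?R (f b\<^sub>0) b\<^sub>0"
      using edge_12[OF fb\<^sub>0(1) True] edge_12[OF fb\<^sub>0(1) b\<^sub>0] x fb\<^sub>0X b\<^sub>0X by simp_all
    then show ?thesis
      by (rule converse_rtranclp_into_rtranclp[OF _ r_into_rtranclp])
  next
    case False
    obtain i where i: "i \<in> {1..k}" "x \<in> V i"
      using x by blast
    with False have "i \<noteq> 2" by auto
    then have "E x b\<^sub>0"
      by (rule kpartite_edgeI[OF i(1) one_two_parts(2) _ i(2) b\<^sub>0])
    then show ?thesis
      using x b\<^sub>0X by (simp add: r_into_rtranclp)
  qed
qed

lemma skeleton_clique_matched_cuts: "skeleton_clique (cut_polytope Vs E) (cut_vec E ` matched_sets)"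
proof (rule skeleton_clique_cut_polytope)
  show "E u w \<Longrightarrow> u \<in> Vs \<and> w \<in> Vs" for u w
    by (rule kpartite_edge_in_parts)
  show "matched_sets \<subseteq> Pow Vs"
    unfolding matched_sets_def using f_into parts_12_subset by blast
  fix S T assume "S \<in> matched_sets" "T \<in> matched_sets"
  then obtain A B where A: "A \<subseteq> V 2 - {b\<^sub>0}" "S = A \<union> f ` A"
    and B: "B \<subseteq> V 2 - {b\<^sub>0}" "T = B \<union> f ` B"
    unfolding matched_sets_def by blast
  have D: "sym_diff S T = sym_diff A B \<union> f ` sym_diff A B"
    using sym_diff_Un_image[OF inj_f image_f_disjoint] A B by auto
  have M: "sym_diff A B \<subseteq> V 2 - {b\<^sub>0}"
    using A B by blast
  have "induced_connected E (sym_diff A B \<union> f ` sym_diff A B)"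
    using M by (intro induced_connected_matched) auto
  moreover have "induced_connected E (Vs - (sym_diff A B \<union> f ` sym_diff A B))"
    using M by (rule induced_connected_compl_matched)
  ultimately show "induced_connected E (sym_diff S T) \<and> induced_connected E (Vs - sym_diff S T)"
    unfolding D ..
qed

lemma inj_on_matched_cuts: "inj_on (\<lambda>A. cut_vec E (A \<union> f ` A)) (Pow (V 2 - {b\<^sub>0}))"
proof (rule inj_onI, rule ccontr)
  fix A B assume A: "A \<in> Pow (V 2 - {b\<^sub>0})" and B: "B \<in> Pow (V 2 - {b\<^sub>0})"
    and eq: "cut_vec E (A \<union> f ` A) = cut_vec E (B \<union> f ` B)" and "A \<noteq> B"
  then obtain a where a: "a \<in> sym_diff A B"
    by blast
  let ?D = "sym_diff (A \<union> f ` A) (B \<union> f ` B)"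
  have D: "?D = sym_diff A B \<union> f ` sym_diff A B"
    using sym_diff_Un_image[OF inj_f image_f_disjoint] A B by auto
  have "f b\<^sub>0 \<notin> f ` sym_diff A B"
    using A B b\<^sub>0 inj_on_image_mem_iff[OF inj_f b\<^sub>0, of "sym_diff A B"] by auto
  moreover have "f b\<^sub>0 \<notin> V 2"
    using b\<^sub>0 image_f_disjoint by blast
  ultimately have "a \<in> ?D" "f b\<^sub>0 \<notin> ?D"
    unfolding D using a A B by auto
  moreover have "E a (f b\<^sub>0)"
    using edge_12 b\<^sub>0 a A B f_into by blast
  ultimately show False
    using eq cut_vec_nth_eq_iff[of E "A \<union> f ` A" a "f b\<^sub>0" "B \<union> f ` B"] by auto
qed

lemma card_matched_cuts: "card (cut_vec E ` matched_sets) = 2 ^ (card (V 2) - 1)"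
  using card_image[OF inj_on_matched_cuts] b\<^sub>0
  by (simp add: matched_sets_def image_image card_Pow card_Diff_singleton)

end

theorem theorem12:
  fixes k :: nat and V :: "nat \<Rightarrow> ('v::finite) set"
  assumes "k \<ge> 2"
    and "\<And>i j. i \<in> {1..k} \<Longrightarrow> j \<in> {1..k} \<Longrightarrow> i \<noteq> j \<Longrightarrow> V i \<inter> V j = {}"
    and "\<And>i. i \<in> {1..k} \<Longrightarrow> card (V i) \<ge> 1"
    and "\<And>i. i \<in> {1..<k} \<Longrightarrow> card (V i) \<ge> card (V (Suc i))"
  shows "\<exists>C. finite C \<and>
           skeleton_clique (cut_polytope (\<Union>i\<in>{1..k}. V i) (kpartite_edge k V)) C \<and>
           card C \<ge> 2 ^ (card (V 2) - 1)"
proof -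
  have parts: "1 \<in> {1..k}" "2 \<in> {1..k}" "1 \<in> {1..<k}"
    using assms(1) by auto
  have "card (V 2) \<le> card (V 1)"
    using assms(4)[OF parts(3)] by (simp add: numeral_2_eq_2)
  then obtain f where f: "inj_on f (V 2)" "f ` V 2 \<subseteq> V 1"
    using card_le_inj[OF finite finite] by blast
  obtain b\<^sub>0 where "b\<^sub>0 \<in> V 2"
    using assms(3)[OF parts(2)] by fastforce
  then interpret kpartite_pairing k V f b\<^sub>0
    using assms(1) assms(2)[OF parts(1,2)] f by unfold_locales auto
  show ?thesis
    using skeleton_clique_matched_cuts card_matched_cuts
    by (intro exI[of _ "cut_vec (kpartite_edge k V) ` matched_sets"]) simp
qed

end
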